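(* Let $X=\{x_1,\dots,x_M\}\subset\mathbb{R}^n$ be finite and $\phi_1,\dots,\phi_N$ real functions on $X$ such that $V$, $V_{i,j}=\phi_j(x_i)$, has rank $N$. Let $(\eta_n)_{n\in\mathbb{N}}$ be a sequence of positive numbers decreasing to $0$. Then for every $n$ there exists a unique minimizer $w_n^*$ of $E_{\eta_n}$ on $\mathbb{R}^M_{\geq0}$, and the sequence $(w_n^* )$ converges to the optimal design $\hat w^*$, namely the element of $S$ satisfying $\|\pi_K\hat w^*\|_2^2=\min\{\|\pi_Kw^*\|_2^2:w^*\in S\}$.
   Context: $G(w)=V^t\operatorname{diag}(w)V$; $E(w)=-\frac1N\log\det G(w)+\|w\|_1$ (with $E=+\infty$ where $\det G(w)=0$). $S$ denotes the set of minimizers of $E$ over $\mathbb{R}^M_{\geq0}$. $K=\{u\in\mathbb{R}^M:\sum_{i=1}^Mu_i\phi_h(x_i)\phi_k(x_i)=0\ \forall h,k=1,\dots,N\}$ (the kernel of $V(\Phi^2;X)^t$), and $\pi_K$ is the orthogonal projection of $\mathbb{R}^M$ onto $K$. For $\eta>0$, $E_\eta(w)=E(w)+\eta\|\pi_Kw\|_2^2$. *)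

theory Defs
  imports "HOL-Analysis.Analysis" "HOL-Library.Extended_Real"
begin

definition design_matrix :: "('M \<Rightarrow> 'a) \<Rightarrow> ('N \<Rightarrow> 'a \<Rightarrow> real) \<Rightarrow> real^'N^'M" where
  "design_matrix x \<phi> = (\<chi> i j. \<phi> j (x i))"

definition diag_mat :: "real^'M \<Rightarrow> real^'M^'M" where
  "diag_mat w = (\<chi> i j. if i = j then w $ i else 0)"

definition Gmat :: "real^'N^'M \<Rightarrow> real^'M \<Rightarrow> real^'N^'N" where
  "Gmat V w = transpose V ** diag_mat w ** V"

definition norm1 :: "real^'M \<Rightarrow> real" where
  "norm1 w = (\<Sum>i\<in>UNIV. \<bar>w $ i\<bar>)"

text \<open>E(w) = -(1/N) log det G(w) + ||w||_1, and +infinity where det G(w) = 0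
  (on the nonnegative orthant det G(w) >= 0, so det G(w) <= 0 is the same as = 0 there).\<close>
definition Efun :: "real^'N^'M \<Rightarrow> real^'M \<Rightarrow> ereal" where
  "Efun V w = (if det (Gmat V w) \<le> 0 then \<infinity>
      else ereal (- (1 / real CARD('N)) * ln (det (Gmat V w)) + norm1 w))"

definition nonneg_orthant :: "(real^'M) set" where
  "nonneg_orthant = {w. \<forall>i. 0 \<le> w $ i}"

definition is_minimizer_on :: "('b \<Rightarrow> ereal) \<Rightarrow> 'b set \<Rightarrow> 'b \<Rightarrow> bool" where
  "is_minimizer_on f A w \<longleftrightarrow> w \<in> A \<and> (\<forall>v\<in>A. f w \<le> f v)"

definition Sset :: "real^'N^'M \<Rightarrow> (real^'M) set" where
  "Sset V = {w. is_minimizer_on (Efun V) nonneg_orthant w}"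

text \<open>K: kernel of V(Phi^2;X)^t, i.e. all u with sum_i u_i phi_h(x_i) phi_k(x_i) = 0 for all h,k.\<close>
definition Kspace :: "real^'N^'M \<Rightarrow> (real^'M) set" where
  "Kspace V = {u. \<forall>h k. (\<Sum>i\<in>UNIV. u $ i * V $ i $ h * V $ i $ k) = 0}"

definition orth_proj :: "'a::real_inner set \<Rightarrow> 'a \<Rightarrow> 'a" where
  "orth_proj L w = (THE p. p \<in> L \<and> (\<forall>u\<in>L. inner (w - p) u = 0))"

definition Eeta :: "real^'N^'M \<Rightarrow> real \<Rightarrow> real^'M \<Rightarrow> ereal" where
  "Eeta V \<eta> w = Efun V w + ereal (\<eta> * (norm (orth_proj (Kspace V) w))\<^sup>2)"

end

(*
  E is finite exactly where G(w) = V^t diag(w) V is positive definite. Diagonalising G(u) and G(v)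
  simultaneously reduces det G(u) det G(v) < det G((u + v)/2)^2, for G(u) <> G(v), to AM-GM; so
  -log det G is strictly midpoint convex except along K, the kernel of w |-> G(w), and along K the
  penalty eta ||pi_K w||^2 is strictly convex. Hence E_eta is strictly convex. As det G(w) grows only
  polynomially in ||w||_1, the sublevel sets of E_eta are compact, giving a unique minimiser w_eta;
  likewise S is compact and convex, and ||pi_K .||^2 has a unique minimiser w_hat on it.
  Comparing w_eta with w_hat gives the Tikhonov estimates ||pi_K w_eta|| <= ||pi_K w_hat|| and
  E(w_eta) <= E(w_hat) + eta ||pi_K w_hat||^2, so every limit point of the bounded sequence of
  minimisers lies in S and minimises ||pi_K .|| there, i.e. equals w_hat.
*)
theory Submission
  imports Defs
begin

section \<open>Simultaneous diagonalisation and log-concavity of the determinant\<close>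

definition pos_def :: "real^'n^'n \<Rightarrow> bool" where
  "pos_def A \<longleftrightarrow> transpose A = A \<and> (\<forall>x. x \<noteq> 0 \<longrightarrow> 0 < x \<bullet> (A *v x))"

lemma symmetric_inner_mult_commute:
  fixes A :: "real^'n^'n"
  assumes "transpose A = A"
  shows "x \<bullet> (A *v y) = y \<bullet> (A *v x)"
  by (metis assms dot_lmul_matrix inner_commute vector_transpose_matrix)

lemma quadratic_form_add_scaleR:
  fixes A :: "real^'n^'n"
  assumes "transpose A = A"
  shows "(p + t *\<^sub>R u) \<bullet> (A *v (p + t *\<^sub>R u))
    = p \<bullet> (A *v p) + 2 * t * (p \<bullet> (A *v u)) + t\<^sup>2 * (u \<bullet> (A *v u))"
  using symmetric_inner_mult_commute[OF assms, of u p]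
  by (simp add: matrix_vector_right_distrib matrix_vector_mult_scaleR inner_add_left
      inner_add_right algebra_simps power2_eq_square)

lemma linear_coeff_eq_0_if_nonpos:
  fixes a c :: real
  assumes "\<And>t. 2 * t * a + t\<^sup>2 * c \<le> 0"
  shows "a = 0"
proof (rule ccontr)
  assume "a \<noteq> 0"
  define s where "s = 1 / (\<bar>c\<bar> + 1)"
  have "0 < s" "\<bar>s * c\<bar> < 1"
    unfolding s_def by (auto simp: abs_mult field_simps)
  then have "0 < 2 + s * c"
    by linarith
  moreover have "2 * (s * a) * a + (s * a)\<^sup>2 * c = s * a\<^sup>2 * (2 + s * c)"
    by (simp add: power2_eq_square algebra_simps)
  ultimately have "0 < 2 * (s * a) * a + (s * a)\<^sup>2 * c"
    using \<open>0 < s\<close> \<open>a \<noteq> 0\<close> by simp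
  with assms[of "s * a"] show False by simp
qed

lemma Rayleigh_quotient_maximizer:
  fixes A B :: "real^'n^'n"
  assumes A: "pos_def A" and U: "subspace U" "U \<noteq> {0}"
  obtains p where "p \<in> U" "p \<bullet> (A *v p) = 1"
    "\<And>z. z \<in> U \<Longrightarrow> z \<bullet> (B *v z) \<le> (p \<bullet> (B *v p)) * (z \<bullet> (A *v z))"
proof -
  have pdA: "\<And>x. x \<noteq> 0 \<Longrightarrow> 0 < x \<bullet> (A *v x)"
    using A unfolding pos_def_def by auto
  define R where "R x = (x \<bullet> (B *v x)) / (x \<bullet> (A *v x))" for x
  define S where "S = U \<inter> sphere 0 1"
  have R_scale: "R (c *\<^sub>R x) = R x" if "c \<noteq> 0" for c x
    unfolding R_def using that by (simp add: matrix_vector_mult_scaleR power2_eq_square)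
  have normalize: "z /\<^sub>R norm z \<in> S" if "z \<in> U" "z \<noteq> 0" for z
    unfolding S_def using U(1) that by (simp add: subspace_mul)
  have "compact S"
    unfolding S_def by (rule closed_Int_compact[OF closed_subspace[OF U(1)] compact_sphere])
  moreover have "S \<noteq> {}"
    using U normalize subspace_0 by blast
  moreover have "continuous_on S R"
    unfolding R_def
  proof (intro continuous_intros ballI)
    show "x \<bullet> (A *v x) \<noteq> 0" if "x \<in> S" for x
      using that pdA[of x] unfolding S_def by fastforce
  qed
  ultimately obtain x0 where x0: "x0 \<in> S" "\<And>z. z \<in> S \<Longrightarrow> R z \<le> R x0"
    using continuous_attains_sup by metis
  define p where "p = inverse (sqrt (x0 \<bullet> (A *v x0))) *\<^sub>R x0"
  have "x0 \<in> U" "x0 \<noteq> 0"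
    using x0(1) unfolding S_def by auto
  with pdA have "0 < x0 \<bullet> (A *v x0)"
    by blast
  with \<open>x0 \<in> U\<close> have p: "p \<in> U" "p \<bullet> (A *v p) = 1" "R p = R x0"
    unfolding p_def using U(1) R_scale by (simp_all add: subspace_mul matrix_vector_mult_scaleR field_simps)
  have "z \<bullet> (B *v z) \<le> (p \<bullet> (B *v p)) * (z \<bullet> (A *v z))" if "z \<in> U" for z
  proof (cases "z = 0")
    case False
    have "R z \<le> R p"
      using x0(2)[OF normalize[OF that False]] R_scale[of "inverse (norm z)" z] False p(3) by simp
    then show ?thesis
      using pdA[OF False] p(2) unfolding R_def by (simp add: divide_le_eq)
  qed simp
  with p that show ?thesis by blast
qed

text \<open>The first-order condition for the maximiser p along p + t u is the generalised eigenvalue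
  equation B p = \<mu> A p, tested against U.\<close>
lemma generalized_eigenvector_in_subspace:
  fixes A B :: "real^'n^'n"
  assumes A: "pos_def A" and B: "transpose B = B" and U: "subspace U" "U \<noteq> {0}"
  obtains p \<mu> where "p \<in> U" "p \<bullet> (A *v p) = 1"
    "\<And>u. u \<in> U \<Longrightarrow> p \<bullet> (B *v u) = \<mu> * (p \<bullet> (A *v u))"
proof -
  have symA: "transpose A = A"
    using A unfolding pos_def_def by auto
  obtain p where p: "p \<in> U" "p \<bullet> (A *v p) = 1"
    and max: "\<And>z. z \<in> U \<Longrightarrow> z \<bullet> (B *v z) \<le> (p \<bullet> (B *v p)) * (z \<bullet> (A *v z))"
    using Rayleigh_quotient_maximizer[OF A U] by blast
  define \<mu> where "\<mu> = p \<bullet> (B *v p)"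
  have "p \<bullet> (B *v u) = \<mu> * (p \<bullet> (A *v u))" if "u \<in> U" for u
  proof -
    have "p \<bullet> (B *v u) - \<mu> * (p \<bullet> (A *v u)) = 0"
    proof (rule linear_coeff_eq_0_if_nonpos)
      fix t
      have "p + t *\<^sub>R u \<in> U"
        using U(1) p(1) that by (simp add: subspace_add subspace_mul)
      from max[OF this] show "2 * t * (p \<bullet> (B *v u) - \<mu> * (p \<bullet> (A *v u)))
          + t\<^sup>2 * (u \<bullet> (B *v u) - \<mu> * (u \<bullet> (A *v u))) \<le> 0"
        unfolding quadratic_form_add_scaleR[OF symA] quadratic_form_add_scaleR[OF B] p(2) \<mu>_def
        by (simp add: algebra_simps)
    qed
    then show ?thesis by simp
  qed
  with p that show ?thesis by blast
qed

lemma conjugate_complement_nontrivial: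
  fixes A :: "real^'n^'n"
  assumes "transpose A = A" "finite P" "card P < CARD('n)"
  shows "{u. \<forall>p\<in>P. p \<bullet> (A *v u) = 0} \<noteq> {0}"
proof -
  have "dim ((*v) A ` P) \<le> card ((*v) A ` P)"
    using assms(2) by (simp add: dim_le_card')
  also have "\<dots> \<le> card P"
    using assms(2) by (rule card_image_le)
  also have "\<dots> < DIM(real^'n)"
    using assms(3) by simp
  finally obtain x where x: "x \<noteq> 0" "\<And>y. y \<in> span ((*v) A ` P) \<Longrightarrow> orthogonal x y"
    using orthogonal_to_subspace_exists by blast
  have "q \<bullet> (A *v x) = 0" if "q \<in> P" for q
  proof -
    have "orthogonal x (A *v q)"
      using x(2) that by (simp add: span_base)
    then show ?thesis
      using symmetric_inner_mult_commute[OF assms(1)] by (simp add: orthogonal_def)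
  qed
  with x(1) show ?thesis
    by blast
qed

text \<open>The last conjunct is the induction invariant: the A-orthogonal complement of P is
  B-orthogonal to P.\<close>
lemma conjugate_system_exists:
  fixes A B :: "real^'n^'n"
  assumes A: "pos_def A" and B: "transpose B = B"
  shows "k \<le> CARD('n) \<Longrightarrow> \<exists>P. finite P \<and> card P = k \<and> (\<forall>p\<in>P. p \<bullet> (A *v p) = 1)
    \<and> (\<forall>p\<in>P. \<forall>q\<in>P. p \<noteq> q \<longrightarrow> p \<bullet> (A *v q) = 0 \<and> p \<bullet> (B *v q) = 0)
    \<and> (\<forall>q\<in>P. \<forall>u. (\<forall>p\<in>P. p \<bullet> (A *v u) = 0) \<longrightarrow> q \<bullet> (B *v u) = 0)"
proof (induction k)
  case 0
  show ?case by (intro exI[of _ "{}"]) auto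
next
  case (Suc k)
  have symA: "transpose A = A"
    using A unfolding pos_def_def by blast
  obtain P where fin: "finite P" and card: "card P = k" and unit: "\<forall>p\<in>P. p \<bullet> (A *v p) = 1"
    and conj: "\<forall>p\<in>P. \<forall>q\<in>P. p \<noteq> q \<longrightarrow> p \<bullet> (A *v q) = 0 \<and> p \<bullet> (B *v q) = 0"
    and inv: "\<forall>q\<in>P. \<forall>u. (\<forall>p\<in>P. p \<bullet> (A *v u) = 0) \<longrightarrow> q \<bullet> (B *v u) = 0"
    using Suc by auto
  define U where "U = {u. \<forall>p\<in>P. p \<bullet> (A *v u) = 0}"
  have "subspace U"
    unfolding U_def subspace_def
    by (auto simp: matrix_vector_right_distrib matrix_vector_mult_scaleR inner_add_right)
  have "U \<noteq> {0}"
    unfolding U_def using conjugate_complement_nontrivial[OF symA fin] Suc.prems card by simp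
  then obtain p \<mu> where p: "p \<in> U" "p \<bullet> (A *v p) = 1"
    and eigen: "\<And>u. u \<in> U \<Longrightarrow> p \<bullet> (B *v u) = \<mu> * (p \<bullet> (A *v u))"
    using generalized_eigenvector_in_subspace[OF A B \<open>subspace U\<close>] by metis
  have "p \<notin> P"
    using p unfolding U_def by auto
  have A_orth: "q \<bullet> (A *v p) = 0" "p \<bullet> (A *v q) = 0" if "q \<in> P" for q
    using p that symmetric_inner_mult_commute[OF symA, of p q] unfolding U_def by auto
  have B_orth: "q \<bullet> (B *v p) = 0" "p \<bullet> (B *v q) = 0" if "q \<in> P" for q
    using inv p that symmetric_inner_mult_commute[OF B, of p q] unfolding U_def by auto
  have "q \<bullet> (B *v u) = 0" if "q \<in> insert p P" "\<forall>r\<in>insert p P. r \<bullet> (A *v u) = 0" for q u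
  proof -
    have "u \<in> U"
      using that(2) unfolding U_def by auto
    then show ?thesis
      using that eigen inv by auto
  qed
  then show ?case
    using fin card \<open>p \<notin> P\<close> unit p(2) conj A_orth B_orth
    by (intro exI[of _ "insert p P"]) auto
qed

lemma congruence_entry:
  fixes M :: "real^'n^'n" and f :: "'n \<Rightarrow> real^'n"
  shows "(transpose (\<chi> a b. f b $ a) ** M ** (\<chi> a b. f b $ a)) $ i $ j = f i \<bullet> (M *v f j)"
proof -
  have "(transpose (\<chi> a b. f b $ a) ** M ** (\<chi> a b. f b $ a)) $ i $ j
      = (\<Sum>k\<in>UNIV. \<Sum>l\<in>UNIV. f i $ l * (M $ l $ k * f j $ k))"
    by (simp add: matrix_matrix_mult_def transpose_def sum_distrib_right mult.assoc)
  also have "\<dots> = f i \<bullet> (M *v f j)"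
    by (subst sum.swap) (simp add: matrix_vector_mult_def inner_vec_def sum_distrib_left)
  finally show ?thesis .
qed

lemma simultaneous_diagonalization:
  fixes A B :: "real^'n^'n"
  assumes "pos_def A" "transpose B = B"
  obtains Q :: "real^'n^'n" where "transpose Q ** A ** Q = mat 1"
    "\<And>i j. i \<noteq> j \<Longrightarrow> (transpose Q ** B ** Q) $ i $ j = 0"
proof -
  obtain P where fin: "finite P" and card: "card P = CARD('n)" and unit: "\<forall>p\<in>P. p \<bullet> (A *v p) = 1"
    and conj: "\<forall>p\<in>P. \<forall>q\<in>P. p \<noteq> q \<longrightarrow> p \<bullet> (A *v q) = 0 \<and> p \<bullet> (B *v q) = 0"
    using conjugate_system_exists[OF assms order_refl] by blast
  obtain f :: "'n \<Rightarrow> real^'n" where f: "bij_betw f UNIV P"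
    using finite_same_card_bij[OF finite fin] card by auto
  then have "f i \<in> P" "f i = f j \<longleftrightarrow> i = j" for i j
    unfolding bij_betw_def inj_on_def by auto
  then have "f i \<bullet> (A *v f j) = (if i = j then 1 else 0)" "i \<noteq> j \<Longrightarrow> f i \<bullet> (B *v f j) = 0" for i j
    using unit conj by auto
  then show ?thesis
    by (intro that[of "\<chi> a b. f b $ a"]) (simp_all add: congruence_entry vec_eq_iff mat_def)
qed

lemma congruence_quadratic_form:
  fixes M :: "real^'m^'m" and Q :: "real^'n^'m"
  shows "x \<bullet> ((transpose Q ** M ** Q) *v x) = (Q *v x) \<bullet> (M *v (Q *v x))"
  by (metis dot_lmul_matrix matrix_vector_mul_assoc vector_transpose_matrix)

lemma det_congruence:
  fixes M Q :: "real^'n^'n"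
  shows "det (transpose Q ** M ** Q) = (det Q)\<^sup>2 * det M"
  by (simp add: det_mul power2_eq_square)

lemma pos_def_congruence:
  fixes M Q :: "real^'n^'n"
  assumes "pos_def M" "invertible Q"
  shows "pos_def (transpose Q ** M ** Q)"
  unfolding pos_def_def
proof (intro conjI allI impI)
  show "transpose (transpose Q ** M ** Q) = transpose Q ** M ** Q"
    using assms(1) by (simp add: pos_def_def matrix_transpose_mul matrix_mul_assoc)
  fix x :: "real^'n"
  assume "x \<noteq> 0"
  then have "Q *v x \<noteq> 0"
    using assms(2) by (metis invertible_def matrix_left_invertible_ker)
  then show "0 < x \<bullet> ((transpose Q ** M ** Q) *v x)"
    using assms(1) by (simp add: pos_def_def congruence_quadratic_form)
qed

lemma pos_def_diagonal_pos:
  fixes A :: "real^'n^'n"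
  assumes "pos_def A"
  shows "0 < A $ i $ i"
proof -
  have "axis i 1 \<bullet> (A *v axis i 1) = A $ i $ i"
    by (simp add: inner_axis' matrix_vector_mult_basis column_def)
  then show ?thesis
    using assms unfolding pos_def_def by (metis axis_eq_0_iff zero_neq_one)
qed

lemma congruence_cancel:
  fixes A B Q :: "real^'n^'n"
  assumes "invertible Q" "transpose Q ** A ** Q = transpose Q ** B ** Q"
  shows "A = B"
proof -
  obtain Q' where Q': "Q ** Q' = mat 1" "Q' ** Q = mat 1"
    using assms(1) invertible_def by blast
  have "transpose Q' ** (transpose Q ** M ** Q) ** Q' = M" for M :: "real^'n^'n"
    by (metis Q'(2) Q'(1) matrix_mul_assoc matrix_mul_lid matrix_mul_rid matrix_transpose_mul transpose_mat)
  then show ?thesis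
    using assms(2) by metis
qed

lemma pos_def_det_pos:
  fixes A :: "real^'n^'n"
  assumes "pos_def A"
  shows "0 < det A"
proof -
  obtain Q :: "real^'n^'n" where "transpose Q ** A ** Q = mat 1"
    using simultaneous_diagonalization[OF assms] assms unfolding pos_def_def by metis
  then have "(det Q)\<^sup>2 * det A = 1"
    by (metis det_congruence det_I)
  then have "0 < (det Q)\<^sup>2 * det A"
    by simp
  then show ?thesis
    by (simp add: zero_less_mult_iff)
qed

lemma congruence_midpoint:
  fixes A B Q :: "real^'n^'n"
  shows "transpose Q ** midpoint A B ** Q = midpoint (transpose Q ** A ** Q) (transpose Q ** B ** Q)"
  unfolding midpoint_def
  by (simp add: vec_eq_iff matrix_matrix_mult_def sum_distrib_left sum_distrib_right sum.distrib
      algebra_simps)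

lemma prod_less_prod_mean_sq:
  fixes \<mu> :: "'i \<Rightarrow> real"
  assumes "finite I" "\<And>i. i \<in> I \<Longrightarrow> 0 < \<mu> i" "j \<in> I" "\<mu> j \<noteq> 1"
  shows "(\<Prod>i\<in>I. \<mu> i) < (\<Prod>i\<in>I. ((1 + \<mu> i) / 2)\<^sup>2)"
proof (rule prod_mono_strict[OF assms(3) _ assms(1)])
  have amgm: "((1 + x) / 2)\<^sup>2 = x + ((1 - x) / 2)\<^sup>2" for x :: real
    by (simp add: power2_eq_square field_simps)
  show "\<mu> j < ((1 + \<mu> j) / 2)\<^sup>2"
    unfolding amgm using assms(4) by simp
  show "0 \<le> \<mu> i \<and> \<mu> i \<le> ((1 + \<mu> i) / 2)\<^sup>2" "0 < ((1 + \<mu> i) / 2)\<^sup>2" if "i \<in> I" for i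
    unfolding amgm using assms(2)[OF that] by (simp_all add: add_pos_nonneg)
qed

text \<open>In a basis that is A-orthonormal and B-orthogonal, A, B and their midpoint are diagonal with
  entries 1, \<mu> i and (1 + \<mu> i) / 2, so the claim is AM-GM for each \<mu> i.\<close>
lemma det_mult_less_det_midpoint_sq:
  fixes A B :: "real^'n^'n"
  assumes A: "pos_def A" and B: "pos_def B" and "A \<noteq> B"
  shows "det A * det B < (det (midpoint A B))\<^sup>2"
proof -
  obtain Q :: "real^'n^'n" where QA: "transpose Q ** A ** Q = mat 1"
    and diag: "\<And>i j. i \<noteq> j \<Longrightarrow> (transpose Q ** B ** Q) $ i $ j = 0"
    using simultaneous_diagonalization[OF A] B unfolding pos_def_def by metis
  define D where "D = transpose Q ** B ** Q"
  define d where "d = (det Q)\<^sup>2"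
  have dA: "d * det A = 1"
    using QA unfolding d_def by (metis det_congruence det_I)
  then have "det Q \<noteq> 0"
    unfolding d_def by auto
  then have "invertible Q" "0 < d"
    unfolding d_def by (simp_all add: invertible_det_nz)
  have D_pos: "0 < D $ i $ i" for i
    unfolding D_def by (rule pos_def_diagonal_pos[OF pos_def_congruence[OF B \<open>invertible Q\<close>]])
  have dB: "d * det B = (\<Prod>i\<in>UNIV. D $ i $ i)"
    using det_diagonal[of D] diag det_congruence[of Q B] unfolding D_def d_def by simp
  have dM: "d * det (midpoint A B) = (\<Prod>i\<in>UNIV. (1 + D $ i $ i) / 2)"
    using det_diagonal[of "midpoint (mat 1) D"] diag det_congruence[of Q "midpoint A B"]
    unfolding congruence_midpoint QA D_def[symmetric] d_def by (simp add: midpoint_def mat_def)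
  obtain j where "D $ j $ j \<noteq> 1"
  proof (rule ccontr)
    assume "\<not> thesis"
    with that have "D = mat 1"
      using diag unfolding D_def by (auto simp: vec_eq_iff mat_def)
    then show False
      using congruence_cancel[OF \<open>invertible Q\<close>] QA \<open>A \<noteq> B\<close> unfolding D_def by metis
  qed
  then have "(d * det A) * (d * det B) < (d * det (midpoint A B))\<^sup>2"
    unfolding dA dB dM prod_power_distrib
    using prod_less_prod_mean_sq[of UNIV "\<lambda>i. D $ i $ i"] D_pos by simp
  then have "d\<^sup>2 * (det A * det B) < d\<^sup>2 * (det (midpoint A B))\<^sup>2"
    by (simp add: power2_eq_square algebra_simps)
  then show ?thesis
    using \<open>0 < d\<close> by simp
qed

lemma pos_def_midpoint:
  fixes A B :: "real^'n^'n"
  assumes "pos_def A" "pos_def B"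
  shows "pos_def (midpoint A B)"
  using assms unfolding pos_def_def midpoint_def
  by (simp add: transpose_def vec_eq_iff scaleR_matrix_vector_assoc[symmetric]
      matrix_vector_mult_add_rdistrib inner_add_right add_pos_pos)

lemma ln_det_midpoint_less:
  fixes A B :: "real^'n^'n"
  assumes "pos_def A" "pos_def B" "A \<noteq> B"
  shows "(ln (det A) + ln (det B)) / 2 < ln (det (midpoint A B))"
proof -
  have pos: "0 < det A" "0 < det B" "0 < det (midpoint A B)"
    using assms pos_def_det_pos pos_def_midpoint by blast+
  have "ln (det A) + ln (det B) = ln (det A * det B)"
    using pos by (simp add: ln_mult)
  also have "\<dots> < ln ((det (midpoint A B))\<^sup>2)"
    using det_mult_less_det_midpoint_sq[OF assms] pos by simp
  finally show ?thesis
    using pos by (simp add: ln_realpow)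
qed

lemma ln_det_midpoint_le:
  fixes A B :: "real^'n^'n"
  assumes "pos_def A" "pos_def B"
  shows "(ln (det A) + ln (det B)) / 2 \<le> ln (det (midpoint A B))"
  using ln_det_midpoint_less[OF assms] by (cases "A = B") auto

section \<open>The information matrix G(w)\<close>

lemma Gmat_entry: "Gmat V w $ h $ k = (\<Sum>i\<in>UNIV. V $ i $ h * w $ i * V $ i $ k)"
  unfolding Gmat_def diag_mat_def
  by (simp add: matrix_matrix_mult_def transpose_def if_distrib cong: if_cong)

lemma linear_Gmat: "linear (Gmat V)"
  by (rule linearI) (simp_all add: vec_eq_iff Gmat_entry algebra_simps sum.distrib sum_distrib_left)

lemma Gmat_midpoint: "Gmat V (midpoint u v) = midpoint (Gmat V u) (Gmat V v)"
  unfolding midpoint_def by (simp add: linear_add[OF linear_Gmat] linear_scale[OF linear_Gmat])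

lemma Gmat_symmetric: "transpose (Gmat V w) = Gmat V w"
  by (simp add: vec_eq_iff transpose_def Gmat_entry mult.commute mult.left_commute)

lemma diag_mat_mult_vector: "diag_mat w *v z = (\<chi> i. w $ i * z $ i)"
  unfolding diag_mat_def matrix_vector_mult_def
  by (simp add: if_distrib[of "\<lambda>a. a * z $ _"] cong: if_cong)

lemma Gmat_quadratic_form: "y \<bullet> (Gmat V w *v y) = (\<Sum>i\<in>UNIV. w $ i * ((V *v y) $ i)\<^sup>2)"
  unfolding Gmat_def congruence_quadratic_form diag_mat_mult_vector
  by (simp add: inner_vec_def power2_eq_square algebra_simps)

lemma Gmat_mult_vector: "Gmat V w *v y = transpose V *v (\<chi> i. w $ i * (V *v y) $ i)"
  unfolding Gmat_def by (simp add: matrix_vector_mul_assoc[symmetric] diag_mat_mult_vector)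

lemma pos_def_Gmat:
  assumes w: "w \<in> nonneg_orthant" and det: "det (Gmat V w) \<noteq> 0"
  shows "pos_def (Gmat V w)"
  unfolding pos_def_def
proof (intro conjI allI impI Gmat_symmetric)
  fix y :: "real^'b"
  assume "y \<noteq> 0"
  have nonneg: "0 \<le> w $ i * ((V *v y) $ i)\<^sup>2" for i
    using w unfolding nonneg_orthant_def by simp
  show "0 < y \<bullet> (Gmat V w *v y)"
  proof (rule ccontr)
    assume "\<not> ?thesis"
    then have "(\<Sum>i\<in>UNIV. w $ i * ((V *v y) $ i)\<^sup>2) = 0"
      unfolding Gmat_quadratic_form using nonneg by (meson sum_nonneg order_antisym not_less)
    then have "w $ i * (V *v y) $ i = 0" for i
      using nonneg by (simp add: sum_nonneg_eq_0_iff)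
    then have "(\<chi> i. w $ i * (V *v y) $ i) = 0"
      by (simp add: vec_eq_iff)
    then have "Gmat V w *v y = 0"
      unfolding Gmat_mult_vector by simp
    then have "y = 0"
      using det by (metis invertible_det_nz invertible_def matrix_left_invertible_ker)
    with \<open>y \<noteq> 0\<close> show False ..
  qed
qed

lemma det_Gmat_ones_pos:
  fixes V :: "real^'N^'M"
  assumes "inj ((*v) V)"
  shows "0 < det (Gmat V (\<chi> i. 1))"
proof (rule pos_def_det_pos)
  have "0 < y \<bullet> (Gmat V (\<chi> i. 1) *v y)" if "y \<noteq> 0" for y
  proof -
    have "V *v y \<noteq> 0"
      using assms that by (metis injD matrix_vector_mult_0_right)
    moreover have "(\<Sum>i\<in>UNIV. 1 * ((V *v y) $ i)\<^sup>2) = (V *v y) \<bullet> (V *v y)"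
      by (simp add: inner_vec_def power2_eq_square)
    ultimately show ?thesis
      by (simp add: Gmat_quadratic_form)
  qed
  then show "pos_def (Gmat V (\<chi> i. 1))"
    unfolding pos_def_def using Gmat_symmetric by blast
qed

lemma subspace_Kspace: "subspace (Kspace V)"
  unfolding subspace_def Kspace_def
  by (auto simp: algebra_simps sum.distrib sum_distrib_left[symmetric])

lemma Gmat_eq_iff: "Gmat V u = Gmat V v \<longleftrightarrow> u - v \<in> Kspace V"
proof -
  have "Gmat V u = Gmat V v \<longleftrightarrow> Gmat V (u - v) = 0"
    by (metis linear_diff[OF linear_Gmat] eq_iff_diff_eq_0)
  also have "\<dots> \<longleftrightarrow> u - v \<in> Kspace V"
    by (simp add: vec_eq_iff Gmat_entry Kspace_def mult.commute mult.left_commute)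
  finally show ?thesis .
qed

lemma orth_proj_eqI:
  fixes L :: "'a::euclidean_space set"
  assumes L: "subspace L" and p: "p \<in> L" "\<And>u. u \<in> L \<Longrightarrow> inner (w - p) u = 0"
  shows "orth_proj L w = p"
  unfolding orth_proj_def
proof (rule the_equality)
  fix p' assume p': "p' \<in> L \<and> (\<forall>u\<in>L. inner (w - p') u = 0)"
  then have "inner (w - p) (p' - p) = 0" "inner (w - p') (p' - p) = 0"
    using L p by (auto simp: subspace_diff)
  then have "inner (p' - p) (p' - p) = 0"
    by (simp add: inner_diff_left)
  then show "p' = p" by simp
qed (use p in blast)

lemma orth_proj_in_orthogonal:
  fixes L :: "'a::euclidean_space set"
  assumes L: "subspace L"
  shows "orth_proj L w \<in> L \<and> (\<forall>u\<in>L. inner (w - orth_proj L w) u = 0)"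
proof -
  obtain y z where "y \<in> span L" "\<And>u. u \<in> span L \<Longrightarrow> orthogonal z u" "w = y + z"
    using orthogonal_subspace_decomp_exists by blast
  moreover have "span L = L"
    using L by (simp add: span_eq_iff)
  ultimately have "y \<in> L" "\<And>u. u \<in> L \<Longrightarrow> inner (w - y) u = 0"
    by (auto simp: orthogonal_def)
  then show ?thesis
    using orth_proj_eqI[OF L] by simp
qed

lemma linear_orth_proj:
  fixes L :: "'a::euclidean_space set"
  assumes L: "subspace L"
  shows "linear (orth_proj L)"
proof (rule linearI)
  note P = orth_proj_in_orthogonal[OF L]
  show "orth_proj L (a + b) = orth_proj L a + orth_proj L b" for a b
    using P[of a] P[of b] L
    by (intro orth_proj_eqI) (auto simp: subspace_add inner_diff_left inner_add_left algebra_simps)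
  show "orth_proj L (c *\<^sub>R a) = c *\<^sub>R orth_proj L a" for c a
    using P[of a] L
    by (intro orth_proj_eqI) (auto simp: subspace_mul inner_diff_left simp flip: scaleR_diff_right)
qed

lemma orth_proj_self:
  fixes L :: "'a::euclidean_space set"
  assumes "subspace L" "u \<in> L"
  shows "orth_proj L u = u"
  using orth_proj_eqI[OF assms] by simp

section \<open>The regularised objective and its strict convexity\<close>

definition feasible :: "real^'N^'M \<Rightarrow> (real^'M) set" where
  "feasible V = {w \<in> nonneg_orthant. 0 < det (Gmat V w)}"

definition penalty :: "real^'N^'M \<Rightarrow> real^'M \<Rightarrow> real" where
  "penalty V w = (norm (orth_proj (Kspace V) w))\<^sup>2"

definition Ereg :: "real^'N^'M \<Rightarrow> real \<Rightarrow> real^'M \<Rightarrow> real" where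
  "Ereg V \<eta> w = - (1 / real CARD('N)) * ln (det (Gmat V w)) + norm1 w + \<eta> * penalty V w"

lemma penalty_nonneg: "0 \<le> penalty V w"
  by (simp add: penalty_def)

lemma Eeta_eq: "Eeta V \<eta> w = (if 0 < det (Gmat V w) then ereal (Ereg V \<eta> w) else \<infinity>)"
  unfolding Eeta_def Efun_def Ereg_def penalty_def by simp

lemma is_minimizer_Eeta_iff:
  assumes "feasible V \<noteq> {}"
  shows "is_minimizer_on (Eeta V \<eta>) nonneg_orthant w \<longleftrightarrow> is_arg_min (Ereg V \<eta>) (\<lambda>w. w \<in> feasible V) w"
proof
  assume min: "is_minimizer_on (Eeta V \<eta>) nonneg_orthant w"
  obtain v where "v \<in> feasible V"
    using assms by blast
  then have "w \<in> feasible V"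
    using min unfolding is_minimizer_on_def feasible_def Eeta_eq
    by (auto split: if_splits dest!: bspec[of _ _ v])
  then show "is_arg_min (Ereg V \<eta>) (\<lambda>w. w \<in> feasible V) w"
    using min unfolding is_minimizer_on_def is_arg_min_linorder feasible_def Eeta_eq by fastforce
next
  assume "is_arg_min (Ereg V \<eta>) (\<lambda>w. w \<in> feasible V) w"
  then show "is_minimizer_on (Eeta V \<eta>) nonneg_orthant w"
    unfolding is_minimizer_on_def is_arg_min_linorder feasible_def Eeta_eq by auto
qed

lemma Sset_eq:
  assumes "feasible V \<noteq> {}"
  shows "Sset V = {w. is_arg_min (Ereg V 0) (\<lambda>w. w \<in> feasible V) w}"
proof -
  have "Efun V = Eeta V 0"
    by (simp add: fun_eq_iff Eeta_def)
  then show ?thesis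
    unfolding Sset_def using is_minimizer_Eeta_iff[OF assms, of 0] by auto
qed

lemma ones_feasible:
  fixes V :: "real^'N^'M"
  assumes "inj ((*v) V)"
  shows "(\<chi> i. 1) \<in> feasible V"
  using det_Gmat_ones_pos[OF assms] unfolding feasible_def nonneg_orthant_def by simp

lemma feasible_nonempty:
  fixes V :: "real^'N^'M"
  shows "inj ((*v) V) \<Longrightarrow> feasible V \<noteq> {}"
  using ones_feasible by blast

lemma norm1_midpoint_le: "norm1 (midpoint u v) \<le> (norm1 u + norm1 v) / 2"
proof -
  have "\<bar>(u $ i + v $ i) / 2\<bar> \<le> (\<bar>u $ i\<bar> + \<bar>v $ i\<bar>) / 2" for i
    using abs_triangle_ineq[of "u $ i" "v $ i"] by simp
  then show ?thesis
    unfolding norm1_def midpoint_def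
    by (simp add: sum_divide_distrib[symmetric] sum.distrib[symmetric] sum_mono)
qed

lemma pos_def_Gmat_feasible: "w \<in> feasible V \<Longrightarrow> pos_def (Gmat V w)"
  unfolding feasible_def by (simp add: pos_def_Gmat)

lemma midpoint_feasible:
  assumes "u \<in> feasible V" "v \<in> feasible V"
  shows "midpoint u v \<in> feasible V"
proof -
  have "pos_def (Gmat V (midpoint u v))"
    unfolding Gmat_midpoint using assms by (simp add: pos_def_Gmat_feasible pos_def_midpoint)
  moreover have "midpoint u v \<in> nonneg_orthant"
    using assms unfolding feasible_def nonneg_orthant_def midpoint_def by simp
  ultimately show ?thesis
    unfolding feasible_def by (simp add: pos_def_det_pos)
qed

lemma Ereg_0_midpoint_less:
  fixes V :: "real^'N^'M"
  assumes "u \<in> feasible V" "v \<in> feasible V" "Gmat V u \<noteq> Gmat V v"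
  shows "Ereg V 0 (midpoint u v) < (Ereg V 0 u + Ereg V 0 v) / 2"
proof -
  have "(ln (det (Gmat V u)) + ln (det (Gmat V v))) / 2 < ln (det (Gmat V (midpoint u v)))"
    unfolding Gmat_midpoint
    by (rule ln_det_midpoint_less) (use assms in \<open>simp_all add: pos_def_Gmat_feasible\<close>)
  then have "(1 / real CARD('N)) * (ln (det (Gmat V u)) + ln (det (Gmat V v)))
      < (1 / real CARD('N)) * (2 * ln (det (Gmat V (midpoint u v))))"
    by (intro mult_strict_left_mono) simp_all
  then show ?thesis
    using norm1_midpoint_le[of u v] unfolding Ereg_def by (simp add: algebra_simps)
qed

lemma Ereg_0_midpoint_le:
  fixes V :: "real^'N^'M"
  assumes "u \<in> feasible V" "v \<in> feasible V"
  shows "Ereg V 0 (midpoint u v) \<le> (Ereg V 0 u + Ereg V 0 v) / 2"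
proof -
  have "(ln (det (Gmat V u)) + ln (det (Gmat V v))) / 2 \<le> ln (det (Gmat V (midpoint u v)))"
    unfolding Gmat_midpoint
    by (rule ln_det_midpoint_le) (use assms in \<open>simp_all add: pos_def_Gmat_feasible\<close>)
  then have "(1 / real CARD('N)) * (ln (det (Gmat V u)) + ln (det (Gmat V v)))
      \<le> (1 / real CARD('N)) * (2 * ln (det (Gmat V (midpoint u v))))"
    by (intro mult_left_mono) simp_all
  then show ?thesis
    using norm1_midpoint_le[of u v] unfolding Ereg_def by (simp add: algebra_simps)
qed

lemma penalty_midpoint:
  "penalty V (midpoint u v) = (penalty V u + penalty V v) / 2 - penalty V (u - v) / 4"
proof -
  note lin = linear_orth_proj[OF subspace_Kspace, of V]
  define a b where "a = orth_proj (Kspace V) u" and "b = orth_proj (Kspace V) v"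
  have mid: "orth_proj (Kspace V) (midpoint u v) = midpoint a b"
    unfolding a_def b_def midpoint_def by (simp add: linear_add[OF lin] linear_scale[OF lin])
  have diff: "orth_proj (Kspace V) (u - v) = a - b"
    unfolding a_def b_def by (rule linear_diff[OF lin])
  show ?thesis
    unfolding penalty_def mid diff a_def[symmetric] b_def[symmetric]
    by (simp add: midpoint_def power2_norm_eq_inner inner_add_left inner_add_right inner_diff_left
        inner_diff_right inner_commute field_simps)
qed

lemma penalty_Kspace: "u \<in> Kspace V \<Longrightarrow> penalty V u = (norm u)\<^sup>2"
  unfolding penalty_def by (simp add: orth_proj_self subspace_Kspace)

lemma Ereg_midpoint_less:
  assumes "0 < \<eta>" "u \<in> feasible V" "v \<in> feasible V" "u \<noteq> v"
  shows "Ereg V \<eta> (midpoint u v) < (Ereg V \<eta> u + Ereg V \<eta> v) / 2"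
proof -
  have Ereg_eta: "Ereg V \<eta> w = Ereg V 0 w + \<eta> * penalty V w" for w
    unfolding Ereg_def by simp
  have penalty_le: "penalty V (midpoint u v) \<le> (penalty V u + penalty V v) / 2"
    using penalty_midpoint[of V u v] penalty_nonneg[of V "u - v"] by linarith
  show ?thesis
  proof (cases "Gmat V u = Gmat V v")
    case True
    then have "penalty V (u - v) > 0"
      using \<open>u \<noteq> v\<close> by (simp add: Gmat_eq_iff penalty_Kspace)
    then have "penalty V (midpoint u v) < (penalty V u + penalty V v) / 2"
      unfolding penalty_midpoint by (simp add: field_simps)
    then have "\<eta> * penalty V (midpoint u v) < (\<eta> * penalty V u + \<eta> * penalty V v) / 2"
      using mult_strict_left_mono[OF _ \<open>0 < \<eta>\<close>] by (fastforce simp: field_simps)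
    then show ?thesis
      using Ereg_0_midpoint_le[OF assms(2,3)] unfolding Ereg_eta by argo
  next
    case False
    have "\<eta> * penalty V (midpoint u v) \<le> (\<eta> * penalty V u + \<eta> * penalty V v) / 2"
      using mult_left_mono[OF penalty_le] \<open>0 < \<eta>\<close> by (simp add: field_simps)
    then show ?thesis
      using Ereg_0_midpoint_less[OF assms(2,3) False] unfolding Ereg_eta by argo
  qed
qed

lemma Ereg_arg_min_unique:
  assumes "0 < \<eta>" "is_arg_min (Ereg V \<eta>) (\<lambda>w. w \<in> feasible V) u"
    "is_arg_min (Ereg V \<eta>) (\<lambda>w. w \<in> feasible V) v"
  shows "u = v"
proof (rule ccontr)
  assume "u \<noteq> v"
  have "u \<in> feasible V" "v \<in> feasible V" "Ereg V \<eta> u = Ereg V \<eta> v"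
    using assms(2,3) unfolding is_arg_min_linorder by (auto intro: order_antisym)
  moreover from this have "Ereg V \<eta> u \<le> Ereg V \<eta> (midpoint u v)"
    using assms(2) midpoint_feasible unfolding is_arg_min_linorder by blast
  ultimately show False
    using Ereg_midpoint_less[OF \<open>0 < \<eta>\<close> _ _ \<open>u \<noteq> v\<close>] by fastforce
qed

lemma Ereg_0_arg_min_Gmat_eq:
  assumes "is_arg_min (Ereg V 0) (\<lambda>w. w \<in> feasible V) u"
    "is_arg_min (Ereg V 0) (\<lambda>w. w \<in> feasible V) v"
  shows "Gmat V u = Gmat V v"
proof (rule ccontr)
  assume "Gmat V u \<noteq> Gmat V v"
  have "u \<in> feasible V" "v \<in> feasible V" "Ereg V 0 u = Ereg V 0 v"
    using assms unfolding is_arg_min_linorder by (auto intro: order_antisym)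
  moreover from this have "Ereg V 0 u \<le> Ereg V 0 (midpoint u v)"
    using assms(1) midpoint_feasible unfolding is_arg_min_linorder by blast
  ultimately show False
    using Ereg_0_midpoint_less[OF _ _ \<open>Gmat V u \<noteq> Gmat V v\<close>] by fastforce
qed

lemma Ereg_0_arg_min_midpoint:
  assumes "is_arg_min (Ereg V 0) (\<lambda>w. w \<in> feasible V) u"
    "is_arg_min (Ereg V 0) (\<lambda>w. w \<in> feasible V) v"
  shows "is_arg_min (Ereg V 0) (\<lambda>w. w \<in> feasible V) (midpoint u v)"
proof -
  have "u \<in> feasible V" "v \<in> feasible V" "Ereg V 0 u = Ereg V 0 v"
    using assms unfolding is_arg_min_linorder by (auto intro: order_antisym)
  then show ?thesis
    using Ereg_0_midpoint_le[of u V v] midpoint_feasible assms(1)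
    unfolding is_arg_min_linorder by fastforce
qed

section \<open>Coercivity, existence and uniqueness of minimisers\<close>

lemma abs_det_le:
  fixes A :: "real^'n^'n"
  assumes "\<And>i j. \<bar>A $ i $ j\<bar> \<le> b"
  shows "\<bar>det A\<bar> \<le> fact CARD('n) * b ^ CARD('n)"
proof -
  have "\<bar>det A\<bar> \<le> (\<Sum>p\<in>{p. p permutes UNIV}. \<bar>of_int (sign p) * (\<Prod>i\<in>UNIV. A $ i $ p i)\<bar>)"
    unfolding det_def by (rule sum_abs)
  also have "\<dots> \<le> (\<Sum>p\<in>{p. p permutes (UNIV :: 'n set)}. b ^ CARD('n))"
  proof (rule sum_mono)
    fix p :: "'n \<Rightarrow> 'n"
    have "\<bar>of_int (sign p) * (\<Prod>i\<in>UNIV. A $ i $ p i)\<bar> = (\<Prod>i\<in>UNIV. \<bar>A $ i $ p i\<bar>)"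
      by (simp add: abs_mult abs_prod sign_def)
    also have "\<dots> \<le> b ^ CARD('n)"
      using prod_mono[of UNIV "\<lambda>i. \<bar>A $ i $ p i\<bar>" "\<lambda>_. b"] assms by simp
    finally show "\<bar>of_int (sign p) * (\<Prod>i\<in>UNIV. A $ i $ p i)\<bar> \<le> b ^ CARD('n)" .
  qed
  also have "\<dots> = fact CARD('n) * b ^ CARD('n)"
    by (simp add: card_permutations)
  finally show ?thesis .
qed

lemma abs_Gmat_entry_le:
  assumes "w \<in> nonneg_orthant"
  shows "\<bar>Gmat V w $ h $ k\<bar> \<le> (norm V)\<^sup>2 * norm1 w"
proof -
  have w: "0 \<le> w $ i" for i
    using assms unfolding nonneg_orthant_def by simp
  have V: "\<bar>V $ i $ j\<bar> \<le> norm V" for i j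
    using component_le_norm_cart[of "V $ i" j] Finite_Cartesian_Product.norm_nth_le[of V i] by linarith
  have "\<bar>Gmat V w $ h $ k\<bar> \<le> (\<Sum>i\<in>UNIV. \<bar>V $ i $ h\<bar> * \<bar>V $ i $ k\<bar> * w $ i)"
    unfolding Gmat_entry using w by (simp add: sum_abs[THEN order_trans] abs_mult mult_ac)
  also have "\<dots> \<le> (\<Sum>i\<in>UNIV. (norm V)\<^sup>2 * w $ i)"
    by (intro sum_mono mult_right_mono w) (simp add: power2_eq_square mult_mono V)
  also have "\<dots> = (norm V)\<^sup>2 * norm1 w"
    using w by (simp add: norm1_def sum_distrib_left)
  finally show ?thesis .
qed

lemma ln_le_half:
  fixes x :: real
  assumes "0 < x"
  shows "ln x \<le> x / 2"
proof -
  have "ln x = ln 2 + ln (x / 2)"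
    using assms by (simp add: ln_div)
  also have "\<dots> \<le> x / 2"
    using ln_le_minus_one[of "x / 2"] ln_2_less_1 assms by simp
  finally show ?thesis .
qed

text \<open>The entries of G(w) are O(||w||_1), so det G(w) is O(||w||_1^N) and its logarithm is
  dominated by the linear term of E.\<close>
lemma Ereg_0_coercive:
  fixes V :: "real^'N^'M"
  obtains K where "\<And>w. w \<in> feasible V \<Longrightarrow> norm1 w / 2 - K \<le> Ereg V 0 w"
proof (rule that)
  define n where "n = real CARD('N)"
  fix w
  assume "w \<in> feasible V"
  define b where "b = (norm V)\<^sup>2 * norm1 w"
  have w: "w \<in> nonneg_orthant" "0 < det (Gmat V w)"
    using \<open>w \<in> feasible V\<close> unfolding feasible_def by auto
  have det_le: "det (Gmat V w) \<le> fact CARD('N) * b ^ CARD('N)"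
    using abs_det_le[of "Gmat V w" b] abs_Gmat_entry_le[OF w(1)] unfolding b_def by fastforce
  have "0 \<le> b"
    unfolding b_def norm1_def by (simp add: sum_nonneg)
  moreover have "0 < fact CARD('N) * b ^ CARD('N)"
    using det_le w(2) by linarith
  ultimately have "0 < b"
    by (cases "b = 0") (simp_all add: zero_power[OF zero_less_card_finite])
  then have "norm V \<noteq> 0" "0 < norm1 w"
    unfolding b_def by (auto simp: zero_less_mult_iff)
  have "ln (det (Gmat V w)) \<le> ln (fact CARD('N) * b ^ CARD('N))"
    using det_le w(2) by simp
  also have "\<dots> = ln (fact CARD('N)) + n * (2 * ln (norm V) + ln (norm1 w))"
    using \<open>0 < b\<close> \<open>norm V \<noteq> 0\<close> \<open>0 < norm1 w\<close>
    by (simp add: b_def n_def ln_mult ln_realpow)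
  finally have "(1 / n) * ln (det (Gmat V w)) \<le> ln (fact CARD('N)) / n + 2 * ln (norm V) + ln (norm1 w)"
    unfolding n_def by (simp add: field_simps)
  then show "norm1 w / 2 - (ln (fact CARD('N)) / n + 2 * ln (norm V)) \<le> Ereg V 0 w"
    using ln_le_half[OF \<open>0 < norm1 w\<close>] unfolding Ereg_def n_def by simp
qed

lemma continuous_on_det_Gmat: "continuous_on S (\<lambda>w. det (Gmat V w))"
  unfolding det_def Gmat_entry by (intro continuous_intros)

lemma continuous_on_penalty: "continuous_on S (penalty V)"
proof -
  have "continuous_on S (orth_proj (Kspace V))"
    by (intro linear_continuous_on linear_orth_proj[THEN linear_conv_bounded_linear[THEN iffD1]]
        subspace_Kspace)
  then show ?thesis
    unfolding penalty_def by (intro continuous_intros)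
qed

lemma continuous_on_Ereg: "continuous_on (feasible V) (Ereg V \<eta>)"
  unfolding Ereg_def norm1_def feasible_def
  by (intro continuous_intros continuous_on_det_Gmat continuous_on_penalty) auto

lemma det_Gmat_ge_if_Ereg_le:
  fixes V :: "real^'N^'M"
  assumes "0 \<le> \<eta>" "w \<in> feasible V" "Ereg V \<eta> w \<le> c"
  shows "exp (- real CARD('N) * c) \<le> det (Gmat V w)"
proof -
  have "0 \<le> norm1 w + \<eta> * penalty V w"
    using assms(1) unfolding norm1_def by (simp add: sum_nonneg penalty_nonneg)
  then have "- (1 / real CARD('N)) * ln (det (Gmat V w)) \<le> c"
    using assms(3) unfolding Ereg_def by linarith
  then have "- real CARD('N) * c \<le> ln (det (Gmat V w))"
    by (simp add: field_simps)
  then show ?thesis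
    using assms(2) unfolding feasible_def by (simp add: ln_ge_iff)
qed

text \<open>Ereg is continuous only where det G(w) > 0; the uniform lower bound on det G(w) along a
  sublevel set is what makes that set closed.\<close>
lemma compact_Ereg_sublevel:
  fixes V :: "real^'N^'M"
  assumes "0 \<le> \<eta>"
  shows "compact {w \<in> feasible V. Ereg V \<eta> w \<le> c}"
  unfolding compact_eq_bounded_closed
proof
  obtain K where K: "\<And>w. w \<in> feasible V \<Longrightarrow> norm1 w / 2 - K \<le> Ereg V 0 w"
    using Ereg_0_coercive by blast
  have "norm w \<le> 2 * (c + K)" if "w \<in> feasible V" "Ereg V \<eta> w \<le> c" for w
  proof -
    have "Ereg V 0 w \<le> Ereg V \<eta> w"
      using assms penalty_nonneg[of V w] unfolding Ereg_def by simp
    then show ?thesis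
      using K[OF that(1)] norm_le_l1_cart[of w] that(2) unfolding norm1_def by argo
  qed
  then show "bounded {w \<in> feasible V. Ereg V \<eta> w \<le> c}"
    unfolding bounded_iff by blast
  define T where "T = {w. (\<forall>i. 0 \<le> w $ i) \<and> exp (- real CARD('N) * c) \<le> det (Gmat V w)}"
  have "closed T"
    unfolding T_def
    by (intro closed_Collect_conj closed_Collect_all closed_Collect_le continuous_intros
        continuous_on_det_Gmat)
  have "T \<subseteq> feasible V"
    unfolding T_def feasible_def nonneg_orthant_def by (auto intro: less_le_trans[OF exp_gt_zero])
  moreover have "w \<in> T" if "w \<in> feasible V" "Ereg V \<eta> w \<le> c" for w
    using det_Gmat_ge_if_Ereg_le[OF assms that] that(1)
    unfolding T_def feasible_def nonneg_orthant_def by simp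
  ultimately have "{w \<in> feasible V. Ereg V \<eta> w \<le> c} = {w \<in> T. Ereg V \<eta> w \<le> c}"
    by blast
  also have "closed \<dots>"
    using continuous_on_subset[OF continuous_on_Ereg \<open>T \<subseteq> feasible V\<close>]
    by (intro continuous_on_closed_Collect_le continuous_on_const \<open>closed T\<close>)
  finally show "closed {w \<in> feasible V. Ereg V \<eta> w \<le> c}" .
qed

lemma arg_min_exists_if_compact_sublevel:
  fixes f :: "'a::topological_space \<Rightarrow> real"
  assumes "compact {x \<in> D. f x \<le> f a}" "a \<in> D" "continuous_on D f"
  shows "\<exists>x. is_arg_min f (\<lambda>x. x \<in> D) x"
proof -
  obtain x where x: "x \<in> {x \<in> D. f x \<le> f a}" "\<And>y. y \<in> {x \<in> D. f x \<le> f a} \<Longrightarrow> f x \<le> f y"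
    using continuous_attains_inf[OF assms(1) _ continuous_on_subset[OF assms(3)]] assms(2) by blast
  have "f x \<le> f y" if "y \<in> D" for y
    using x that by (cases "f y \<le> f a") auto
  with x(1) show ?thesis
    unfolding is_arg_min_linorder by blast
qed

lemma Ereg_arg_min_exists:
  fixes V :: "real^'N^'M"
  assumes "inj ((*v) V)" "0 \<le> \<eta>"
  shows "\<exists>w. is_arg_min (Ereg V \<eta>) (\<lambda>w. w \<in> feasible V) w"
  using arg_min_exists_if_compact_sublevel[OF compact_Ereg_sublevel[OF assms(2)]
      ones_feasible[OF assms(1)] continuous_on_Ereg] .

lemma Eeta_minimizer_ex1:
  fixes V :: "real^'N^'M"
  assumes "inj ((*v) V)" "0 < \<eta>"
  shows "\<exists>!w. is_minimizer_on (Eeta V \<eta>) nonneg_orthant w"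
proof -
  obtain w where "is_arg_min (Ereg V \<eta>) (\<lambda>w. w \<in> feasible V) w"
    using Ereg_arg_min_exists[OF assms(1) less_imp_le[OF assms(2)]] by blast
  then show ?thesis
    unfolding is_minimizer_Eeta_iff[OF feasible_nonempty[OF assms(1)]]
    using Ereg_arg_min_unique[OF assms(2)] by blast
qed

lemma Sset_eq_sublevel:
  fixes V :: "real^'N^'M"
  assumes "inj ((*v) V)" "s \<in> Sset V"
  shows "Sset V = {w \<in> feasible V. Ereg V 0 w \<le> Ereg V 0 s}"
proof -
  note S = Sset_eq[OF feasible_nonempty[OF assms(1)]]
  have s: "s \<in> feasible V" "\<And>y. y \<in> feasible V \<Longrightarrow> Ereg V 0 s \<le> Ereg V 0 y"
    using assms(2) unfolding S is_arg_min_linorder by auto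
  show ?thesis
  proof (intro set_eqI iffI)
    fix w
    assume "w \<in> Sset V"
    then show "w \<in> {w \<in> feasible V. Ereg V 0 w \<le> Ereg V 0 s}"
      using s(1) unfolding S is_arg_min_linorder by simp
  next
    fix w
    assume w: "w \<in> {w \<in> feasible V. Ereg V 0 w \<le> Ereg V 0 s}"
    then have "Ereg V 0 w \<le> Ereg V 0 y" if "y \<in> feasible V" for y
      using s(2)[OF that] by simp
    with w show "w \<in> Sset V"
      unfolding S is_arg_min_linorder by simp
  qed
qed

lemma penalty_arg_min_Sset_exists:
  fixes V :: "real^'N^'M"
  assumes "inj ((*v) V)"
  shows "\<exists>w. is_arg_min (penalty V) (\<lambda>w. w \<in> Sset V) w"
proof -
  obtain s where "is_arg_min (Ereg V 0) (\<lambda>w. w \<in> feasible V) s"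
    using Ereg_arg_min_exists[OF assms order_refl] by blast
  then have "s \<in> Sset V"
    unfolding Sset_eq[OF feasible_nonempty[OF assms]] by simp
  then have "compact (Sset V)" "Sset V \<noteq> {}"
    unfolding Sset_eq_sublevel[OF assms \<open>s \<in> Sset V\<close>]
    by (auto intro: compact_Ereg_sublevel[OF order_refl])
  then obtain w where "w \<in> Sset V" "\<forall>v\<in>Sset V. penalty V w \<le> penalty V v"
    using continuous_attains_inf[OF _ _ continuous_on_penalty] by blast
  then show ?thesis
    unfolding is_arg_min_linorder by blast
qed

text \<open>Minimisers of E share G(w), so two of them differ by an element of K, on which the penalty
  is strictly convex.\<close>
lemma penalty_arg_min_Sset_unique:
  fixes V :: "real^'N^'M"
  assumes "inj ((*v) V)" "is_arg_min (penalty V) (\<lambda>w. w \<in> Sset V) a"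
    "is_arg_min (penalty V) (\<lambda>w. w \<in> Sset V) b"
  shows "a = b"
proof (rule ccontr)
  assume "a \<noteq> b"
  note S = Sset_eq[OF feasible_nonempty[OF assms(1)]]
  have "a \<in> Sset V" "b \<in> Sset V" and eq: "penalty V a = penalty V b"
    using assms(2,3) unfolding is_arg_min_linorder by (simp_all add: order_antisym)
  then have min_E: "is_arg_min (Ereg V 0) (\<lambda>w. w \<in> feasible V) a"
    "is_arg_min (Ereg V 0) (\<lambda>w. w \<in> feasible V) b"
    unfolding S by simp_all
  note mid = Ereg_0_arg_min_Gmat_eq[OF min_E] Ereg_0_arg_min_midpoint[OF min_E]
  have "0 < penalty V (a - b)"
    using mid(1) \<open>a \<noteq> b\<close> by (simp add: Gmat_eq_iff penalty_Kspace)
  then have "penalty V (midpoint a b) < penalty V a"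
    using penalty_midpoint[of V a b] eq by simp
  moreover have "penalty V a \<le> penalty V (midpoint a b)"
    using assms(2) mid(2) unfolding S is_arg_min_linorder by simp
  ultimately show False by simp
qed

section \<open>Convergence of the regularised minimisers\<close>

lemma Tikhonov_estimates:
  assumes "0 < \<eta>" "is_arg_min (Ereg V \<eta>) (\<lambda>w. w \<in> feasible V) w"
    "is_arg_min (Ereg V 0) (\<lambda>w. w \<in> feasible V) s"
  shows "penalty V w \<le> penalty V s" "Ereg V 0 w \<le> Ereg V 0 s + \<eta> * penalty V s"
proof -
  have Ereg_eta: "Ereg V \<eta> v = Ereg V 0 v + \<eta> * penalty V v" for v
    unfolding Ereg_def by simp
  have "Ereg V 0 w + \<eta> * penalty V w \<le> Ereg V 0 s + \<eta> * penalty V s"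
    using assms(2,3) unfolding is_arg_min_linorder Ereg_eta by blast
  moreover have "Ereg V 0 s \<le> Ereg V 0 w"
    using assms(2,3) unfolding is_arg_min_linorder by blast
  ultimately have "\<eta> * penalty V w \<le> \<eta> * penalty V s"
    by linarith
  then show "penalty V w \<le> penalty V s"
    using assms(1) by simp
  have "0 \<le> \<eta> * penalty V w"
    using assms(1) penalty_nonneg[of V w] by simp
  then show "Ereg V 0 w \<le> Ereg V 0 s + \<eta> * penalty V s"
    using \<open>Ereg V 0 w + \<eta> * penalty V w \<le> _\<close> by linarith
qed

lemma LIMSEQ_if_subseq_limits_eq:
  fixes x :: "nat \<Rightarrow> 'a::metric_space"
  assumes "compact K" "\<And>n. x n \<in> K" "\<And>r l. strict_mono r \<Longrightarrow> (x \<circ> r) \<longlonglongrightarrow> l \<Longrightarrow> l = a"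
  shows "x \<longlonglongrightarrow> a"
proof (rule ccontr)
  assume "\<not> x \<longlonglongrightarrow> a"
  then obtain e where "0 < e" "\<not> eventually (\<lambda>n. dist (x n) a < e) sequentially"
    unfolding tendsto_iff by blast
  then obtain r :: "nat \<Rightarrow> nat" where r: "strict_mono r" "\<And>n. e \<le> dist (x (r n)) a"
    using not_eventually_sequentiallyD by (metis not_less)
  have "\<forall>n. (x \<circ> r) n \<in> K"
    using assms(2) by simp
  then obtain l r' where "strict_mono r'" "((x \<circ> r) \<circ> r') \<longlonglongrightarrow> l"
    using seq_compactE[OF compact_imp_seq_compact[OF assms(1)]] by metis
  moreover from this have "l = a"
    using assms(3)[of "r \<circ> r'"] r(1) by (simp add: strict_mono_o o_assoc)
  ultimately have "(\<lambda>n. dist (x (r (r' n))) a) \<longlonglongrightarrow> 0"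
    by (simp add: o_def tendsto_dist_iff[symmetric])
  moreover have "\<forall>n. e \<le> dist (x (r (r' n))) a"
    using r(2) by blast
  ultimately have "e \<le> 0"
    by (intro LIMSEQ_le_const) auto
  with \<open>0 < e\<close> show False by simp
qed

lemma Tikhonov_limit_point_eq:
  fixes V :: "real^'N^'M" and w :: "nat \<Rightarrow> real^'M"
  assumes inj: "inj ((*v) V)" and pos: "\<And>n. 0 < \<eta> n" and "\<eta> \<longlonglongrightarrow> 0"
    and w: "\<And>n. is_arg_min (Ereg V (\<eta> n)) (\<lambda>w. w \<in> feasible V) (w n)"
    and wh: "is_arg_min (penalty V) (\<lambda>w. w \<in> Sset V) wh"
    and r: "strict_mono r" and l: "(w \<circ> r) \<longlonglongrightarrow> l" "l \<in> feasible V"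
  shows "l = wh"
proof -
  have "wh \<in> Sset V"
    using wh unfolding is_arg_min_linorder by blast
  then have wh_min: "is_arg_min (Ereg V 0) (\<lambda>w. w \<in> feasible V) wh"
    unfolding Sset_eq[OF feasible_nonempty[OF inj]] by blast
  note est = Tikhonov_estimates[OF pos w wh_min]
  have "\<forall>n. w (r n) \<in> feasible V"
    using w unfolding is_arg_min_linorder by blast
  then have "(\<lambda>n. Ereg V 0 (w (r n))) \<longlonglongrightarrow> Ereg V 0 l"
    using continuous_on_tendsto_compose[OF continuous_on_Ereg[of V 0] l(1,2)] by (simp add: o_def)
  moreover have "(\<lambda>n. Ereg V 0 wh + \<eta> (r n) * penalty V wh) \<longlonglongrightarrow> Ereg V 0 wh"
    using LIMSEQ_subseq_LIMSEQ[OF \<open>\<eta> \<longlonglongrightarrow> 0\<close> r]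
    by (auto intro!: tendsto_eq_intros simp: o_def)
  ultimately have "Ereg V 0 l \<le> Ereg V 0 wh"
    by (rule LIMSEQ_le) (use est(2) in blast)
  then have "l \<in> Sset V"
    using Sset_eq_sublevel[OF inj \<open>wh \<in> Sset V\<close>] l(2) by blast
  have "(\<lambda>n. penalty V (w (r n))) \<longlonglongrightarrow> penalty V l"
    using continuous_on_tendsto_compose[OF continuous_on_penalty[of UNIV V] l(1)] by (simp add: o_def)
  then have "penalty V l \<le> penalty V wh"
    using est(1) by (intro LIMSEQ_le_const2) auto
  then have "is_arg_min (penalty V) (\<lambda>w. w \<in> Sset V) l"
    using wh \<open>l \<in> Sset V\<close> unfolding is_arg_min_linorder by fastforce
  then show "l = wh"
    using penalty_arg_min_Sset_unique[OF inj _ wh] by blast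
qed

lemma Tikhonov_convergence:
  fixes V :: "real^'N^'M" and w :: "nat \<Rightarrow> real^'M"
  assumes inj: "inj ((*v) V)" and pos: "\<And>n. 0 < \<eta> n" and "decseq \<eta>" "\<eta> \<longlonglongrightarrow> 0"
    and w: "\<And>n. is_arg_min (Ereg V (\<eta> n)) (\<lambda>w. w \<in> feasible V) (w n)"
    and wh: "is_arg_min (penalty V) (\<lambda>w. w \<in> Sset V) wh"
  shows "w \<longlonglongrightarrow> wh"
proof -
  have wh_min: "is_arg_min (Ereg V 0) (\<lambda>w. w \<in> feasible V) wh"
    using wh unfolding Sset_eq[OF feasible_nonempty[OF inj]] is_arg_min_linorder by blast
  define L where "L = {v \<in> feasible V. Ereg V 0 v \<le> Ereg V 0 wh + \<eta> 0 * penalty V wh}"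
  have "compact L"
    unfolding L_def by (rule compact_Ereg_sublevel[OF order_refl])
  moreover have "w n \<in> L" for n
  proof -
    have "\<eta> n * penalty V wh \<le> \<eta> 0 * penalty V wh"
      using \<open>decseq \<eta>\<close> penalty_nonneg[of V wh] by (simp add: decseq_def mult_right_mono)
    moreover have "w n \<in> feasible V"
      using w[of n] unfolding is_arg_min_linorder by blast
    ultimately show ?thesis
      using Tikhonov_estimates(2)[OF pos w wh_min, of n] unfolding L_def by simp
  qed
  moreover have "l = wh" if "strict_mono r" "(w \<circ> r) \<longlonglongrightarrow> l" for r l
  proof -
    have "l \<in> L"
      using \<open>compact L\<close> \<open>\<And>n. w n \<in> L\<close> that(2)
      by (metis closed_sequentially compact_imp_closed comp_apply)
    then show ?thesis
      using Tikhonov_limit_point_eq[OF inj pos \<open>\<eta> \<longlonglongrightarrow> 0\<close> w wh that] unfolding L_def by blast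
  qed
  ultimately show ?thesis
    by (rule LIMSEQ_if_subseq_limits_eq)
qed

lemma Eeta_minimizers_tendsto_optimal_design:
  fixes V :: "real^'N^'M"
  assumes inj: "inj ((*v) V)" and pos: "\<And>n. 0 < \<eta> n" and "decseq \<eta>" "\<eta> \<longlonglongrightarrow> 0"
  shows "(\<lambda>n. THE w. is_minimizer_on (Eeta V (\<eta> n)) nonneg_orthant w)
    \<longlonglongrightarrow> (THE wh. is_arg_min (penalty V) (\<lambda>w. w \<in> Sset V) wh)"
proof (rule Tikhonov_convergence[OF assms])
  show "is_arg_min (Ereg V (\<eta> n)) (\<lambda>w. w \<in> feasible V)
      (THE w. is_minimizer_on (Eeta V (\<eta> n)) nonneg_orthant w)" for n
    using theI'[OF Eeta_minimizer_ex1[OF inj pos]] is_minimizer_Eeta_iff[OF feasible_nonempty[OF inj]]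
    by blast
  show "is_arg_min (penalty V) (\<lambda>w. w \<in> Sset V) (THE wh. is_arg_min (penalty V) (\<lambda>w. w \<in> Sset V) wh)"
    using penalty_arg_min_Sset_exists[OF inj] penalty_arg_min_Sset_unique[OF inj]
    by (metis theI)
qed

lemma optimal_design_iff:
  "(wh \<in> Sset V \<and> (\<forall>w\<in>Sset V. (norm (orth_proj (Kspace V) wh))\<^sup>2 \<le> (norm (orth_proj (Kspace V) w))\<^sup>2))
    \<longleftrightarrow> is_arg_min (penalty V) (\<lambda>w. w \<in> Sset V) wh"
  by (auto simp: is_arg_min_linorder penalty_def)

theorem mainTheorem5:
  fixes x :: "'M::finite \<Rightarrow> real^'d"
    and \<phi> :: "'N::finite \<Rightarrow> real^'d \<Rightarrow> real"
    and \<eta> :: "nat \<Rightarrow> real"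
  assumes "inj x"
    and "rank (design_matrix x \<phi>) = CARD('N)"
    and "\<And>n. 0 < \<eta> n"
    and "decseq \<eta>"
    and "\<eta> \<longlonglongrightarrow> 0"
  shows "(\<forall>n. \<exists>!w. is_minimizer_on (Eeta (design_matrix x \<phi>) (\<eta> n)) nonneg_orthant w)
    \<and> (\<exists>!wh. wh \<in> Sset (design_matrix x \<phi>) \<and>
          (\<forall>w\<in>Sset (design_matrix x \<phi>).
             (norm (orth_proj (Kspace (design_matrix x \<phi>)) wh))\<^sup>2
               \<le> (norm (orth_proj (Kspace (design_matrix x \<phi>)) w))\<^sup>2))
    \<and> (\<lambda>n. THE w. is_minimizer_on (Eeta (design_matrix x \<phi>) (\<eta> n)) nonneg_orthant w)
        \<longlonglongrightarrow> (THE wh. wh \<in> Sset (design_matrix x \<phi>) \<and>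
          (\<forall>w\<in>Sset (design_matrix x \<phi>).
             (norm (orth_proj (Kspace (design_matrix x \<phi>)) wh))\<^sup>2
               \<le> (norm (orth_proj (Kspace (design_matrix x \<phi>)) w))\<^sup>2))"
proof -
  \<comment> \<open>The rank hypothesis alone makes V injective.\<close>
  have inj: "inj ((*v) (design_matrix x \<phi>))"
    using assms(2) full_rank_injective by blast
  show ?thesis
    unfolding optimal_design_iff
    using Eeta_minimizer_ex1[OF inj assms(3)]
      penalty_arg_min_Sset_exists[OF inj] penalty_arg_min_Sset_unique[OF inj]
      Eeta_minimizers_tendsto_optimal_design[OF inj assms(3-5)]
    by blast
qed

end
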